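(* Let $\kappa$ be a regular uncountable cardinal and $I$ an ideal on $\kappa$ which is a p-point. Then $I$ is prepleasant if and only if $I$ is pleasant.
   Context: An ideal on $\kappa$ is a family of subsets of $\kappa$ closed under subsets and finite unions, which is $<\kappa$-complete and contains all singletons; $I_\kappa=\{X\subseteq\kappa:|X|<\kappa\}$. $I^*=\{\kappa\setminus X: X\in I\}$. For an ideal $J$, a function $f$ with domain $\subseteq\kappa$ is $J$-small if $f^{-1}(\{\xi\})\in J$ for every $\xi<\kappa$. $I$ is a p-point if for every $I$-small $f:\kappa\to\kappa$ there is $X\in I^*$ with $f\restriction X$ being $I_\kappa$-small. For $A\subseteq\kappa$ and $X_\alpha\subseteq\kappa$, $\bigtriangledown_{\alpha\in A}X_\alpha=\{\xi<\kappa:\exists\alpha<\xi\,(\alpha\in A\wedge \xi\in X_\alpha)\}$. $I$ is pleasant if whenever $A\in I$ and $X_\alpha\in I$ for all $\alpha$, then $\bigtriangledown_{\alpha\in A}X_\alpha\in I$. $I$ is prepleasant if for every $Q\in I$ and every sequence $\langle B_\alpha\rangle_{\alpha<\kappa}$ of bounded subsets of $\kappa$, $\bigtriangledown_{\alpha\in Q}B_\alpha\in I$. *)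

theory Defs
  imports Main
begin

unbundle cardinal_syntax

text \<open>The cardinal kappa is modelled as a well-ordered type 'k whose order is
  the ordinal kappa (i.e. 'k is order-isomorphic to the set of ordinals below kappa).\<close>

definition kord :: "('k::wellorder) rel" where
  "kord = {(x, y). x \<le> y}"

definition regular_uncountable_cardinal_type :: "('k::wellorder) itself \<Rightarrow> bool" where
  "regular_uncountable_cardinal_type _ \<longleftrightarrow>
     Card_order (kord :: 'k rel) \<and> regularCard (kord :: 'k rel) \<and>
     \<not> |UNIV :: 'k set| \<le>o |UNIV :: nat set|"

definition Ikappa :: "('k::wellorder) set set" where
  "Ikappa = {X. |X| <o |UNIV :: 'k set|}"

definition is_ideal :: "('k::wellorder) set set \<Rightarrow> bool" where
  "is_ideal I \<longleftrightarrow>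
     (\<forall>X Y. X \<in> I \<and> Y \<subseteq> X \<longrightarrow> Y \<in> I) \<and>
     (\<forall>X Y. X \<in> I \<and> Y \<in> I \<longrightarrow> X \<union> Y \<in> I) \<and>
     (\<forall>F. F \<subseteq> I \<and> |F| <o |UNIV :: 'k set| \<longrightarrow> \<Union>F \<in> I) \<and>
     (\<forall>x. {x} \<in> I)"

definition dual_filter :: "('k::wellorder) set set \<Rightarrow> 'k set set" where
  "dual_filter I = {- X | X. X \<in> I}"

definition small :: "('k::wellorder) set set \<Rightarrow> ('k \<Rightarrow> 'k) \<Rightarrow> 'k set \<Rightarrow> bool" where
  "small J f D \<longleftrightarrow> (\<forall>\<xi>. {x \<in> D. f x = \<xi>} \<in> J)"

definition p_point :: "('k::wellorder) set set \<Rightarrow> bool" where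
  "p_point I \<longleftrightarrow>
     (\<forall>f :: 'k \<Rightarrow> 'k. small I f UNIV \<longrightarrow>
        (\<exists>X \<in> dual_filter I. small Ikappa f X))"

definition diag_union :: "('k::wellorder) set \<Rightarrow> ('k \<Rightarrow> 'k set) \<Rightarrow> 'k set" where
  "diag_union A X = {\<xi>. \<exists>\<alpha>. \<alpha> < \<xi> \<and> \<alpha> \<in> A \<and> \<xi> \<in> X \<alpha>}"

definition pleasant :: "('k::wellorder) set set \<Rightarrow> bool" where
  "pleasant I \<longleftrightarrow>
     (\<forall>A X. A \<in> I \<and> (\<forall>\<alpha>. X \<alpha> \<in> I) \<longrightarrow> diag_union A X \<in> I)"

definition bounded_set :: "('k::wellorder) set \<Rightarrow> bool" where
  "bounded_set B \<longleftrightarrow> (\<exists>\<beta>. B \<subseteq> {..<\<beta>})"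

definition prepleasant :: "('k::wellorder) set set \<Rightarrow> bool" where
  "prepleasant I \<longleftrightarrow>
     (\<forall>Q B. Q \<in> I \<and> (\<forall>\<alpha>. bounded_set (B \<alpha>)) \<longrightarrow> diag_union Q B \<in> I)"

end

theory Submission imports Defs begin

text \<open>Bounded subsets of \<open>\<kappa>\<close> are exactly those of size \<open>< \<kappa>\<close> (by regularity), and
  those lie in every ideal; so pleasantness implies prepleasantness. Conversely,
  given \<open>A \<in> I\<close> and \<open>X\<^sub>\<alpha> \<in> I\<close>, send each point of the diagonal union to its least
  witness \<open>\<alpha>\<close>. This map is \<open>I\<close>-small, its fibres lying in \<open>X\<^sub>\<alpha> \<union> {\<alpha>}\<close>, so the p-point
  property yields \<open>Y \<in> I\<^sup>*\<close> on which all fibres have size \<open>< \<kappa>\<close>, i.e. are bounded.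
  Prepleasantness applied to these fibres shows that the diagonal union is in \<open>I\<close>
  on \<open>Y\<close>, hence everywhere.\<close>

lemma Field_kord [simp]: "Field (kord :: 'k::wellorder rel) = UNIV"
  by (auto simp: kord_def Field_def)

lemma underS_kord [simp]: "underS (kord :: 'k::wellorder rel) a = {..<a}"
  by (auto simp: underS_def kord_def)

lemma card_of_UNIV_ordIso_kord:
  assumes "regular_uncountable_cardinal_type TYPE('k::wellorder)"
  shows "|UNIV :: 'k set| =o (kord :: 'k rel)"
  using assms card_of_Field_ordIso Field_kord
  unfolding regular_uncountable_cardinal_type_def by metis

lemma regular_uncountable_infinite_UNIV:
  assumes "regular_uncountable_cardinal_type TYPE('k::wellorder)"
  shows "infinite (UNIV :: 'k set)"
proof
  assume "finite (UNIV :: 'k set)"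
  then obtain f :: "'k \<Rightarrow> nat" where "inj_on f UNIV"
    using finite_imp_inj_to_nat_seg by blast
  then have "|UNIV :: 'k set| \<le>o |UNIV :: nat set|"
    using card_of_ordLeq by blast
  then show False
    using assms unfolding regular_uncountable_cardinal_type_def by blast
qed

lemma finite_card_of_ordLess_UNIV:
  assumes "regular_uncountable_cardinal_type TYPE('k::wellorder)" and "finite (S :: 'k set)"
  shows "|S| <o |UNIV :: 'k set|"
proof -
  have "\<not> |UNIV :: 'k set| \<le>o |S|"
    using card_of_ordLeq_finite assms regular_uncountable_infinite_UNIV by blast
  then show ?thesis
    using not_ordLeq_iff_ordLess card_of_Well_order by blast
qed

lemma card_of_lessThan_ordLess_UNIV:
  assumes "regular_uncountable_cardinal_type TYPE('k::wellorder)"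
  shows "|{..<a :: 'k}| <o |UNIV :: 'k set|"
proof -
  have "Card_order (kord :: 'k rel)"
    using assms unfolding regular_uncountable_cardinal_type_def by blast
  then have "|{..<a}| <o (kord :: 'k rel)"
    using card_of_underS[of kord a] by simp
  then show ?thesis
    using card_of_UNIV_ordIso_kord[OF assms] ordIso_symmetric ordLess_ordIso_trans by blast
qed

lemma regular_uncountable_ex_greater:
  assumes "regular_uncountable_cardinal_type TYPE('k::wellorder)"
  shows "\<exists>b. (a :: 'k) < b"
proof (rule ccontr)
  assume "\<nexists>b. a < b"
  then have "UNIV = {a} \<union> {..<a}"
    by (auto simp: not_less le_less)
  moreover have "|{a} \<union> {..<a}| <o |UNIV :: 'k set|"
    using card_of_Un_ordLess_infinite[OF regular_uncountable_infinite_UNIV[OF assms]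
        finite_card_of_ordLess_UNIV[OF assms] card_of_lessThan_ordLess_UNIV[OF assms], of "{a}"]
    by simp
  ultimately show False
    using ordLess_irreflexive by metis
qed

lemma bounded_set_iff_Ikappa:
  assumes "regular_uncountable_cardinal_type TYPE('k::wellorder)"
  shows "bounded_set (S :: 'k set) \<longleftrightarrow> S \<in> Ikappa"
proof
  assume "bounded_set S"
  then obtain \<beta> where "S \<subseteq> {..<\<beta>}"
    unfolding bounded_set_def by blast
  then have "|S| \<le>o |{..<\<beta>}|"
    by (rule card_of_mono1)
  then have "|S| <o |UNIV :: 'k set|"
    using card_of_lessThan_ordLess_UNIV[OF assms] by (rule ordLeq_ordLess_trans)
  then show "S \<in> Ikappa"
    unfolding Ikappa_def by simp
next
  assume "S \<in> Ikappa"
  then have "|S| <o |UNIV :: 'k set|"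
    unfolding Ikappa_def by blast
  then have "|S| <o (kord :: 'k rel)"
    using card_of_UNIV_ordIso_kord[OF assms] by (rule ordLess_ordIso_trans)
  then have "\<not> |S| =o (kord :: 'k rel)"
    by (rule not_ordLess_ordIso)
  moreover have "regularCard (kord :: 'k rel)"
    using assms unfolding regular_uncountable_cardinal_type_def by blast
  ultimately have "\<not> cofinal S kord"
    unfolding regularCard_def by auto
  then obtain c where "\<forall>b\<in>S. c = b \<or> \<not> c \<le> b"
    unfolding cofinal_def kord_def by auto
  then have "\<forall>b\<in>S. b \<le> c"
    by (auto simp: not_le)
  moreover obtain d where "c < d"
    using regular_uncountable_ex_greater[OF assms] by blast
  ultimately show "bounded_set S"
    unfolding bounded_set_def by (auto intro: order_le_less_trans)
qed

lemma ideal_mono: "is_ideal I \<Longrightarrow> X \<in> I \<Longrightarrow> Y \<subseteq> X \<Longrightarrow> Y \<in> I"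
  unfolding is_ideal_def by (elim conjE) blast

lemma ideal_Un: "is_ideal I \<Longrightarrow> X \<in> I \<Longrightarrow> Y \<in> I \<Longrightarrow> X \<union> Y \<in> I"
  unfolding is_ideal_def by (elim conjE) blast

lemma ideal_singleton: "is_ideal I \<Longrightarrow> {x} \<in> I"
  unfolding is_ideal_def by (elim conjE) blast

lemma ideal_Union:
  fixes I :: "('k::wellorder) set set"
  shows "is_ideal I \<Longrightarrow> F \<subseteq> I \<Longrightarrow> |F| <o |UNIV :: 'k set| \<Longrightarrow> \<Union>F \<in> I"
  unfolding is_ideal_def by (elim conjE) blast

lemma Ikappa_subset_ideal:
  fixes I :: "('k::wellorder) set set"
  assumes "is_ideal I"
  shows "Ikappa \<subseteq> I"
proof
  fix S :: "'k set"
  assume "S \<in> Ikappa"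
  have "|(\<lambda>x. {x}) ` S| \<le>o |S|"
    by (rule card_of_image)
  moreover have "|S| <o |UNIV :: 'k set|"
    using \<open>S \<in> Ikappa\<close> unfolding Ikappa_def by simp
  ultimately have "|(\<lambda>x. {x}) ` S| <o |UNIV :: 'k set|"
    by (rule ordLeq_ordLess_trans)
  moreover have "(\<lambda>x. {x}) ` S \<subseteq> I"
    using ideal_singleton[OF assms] by blast
  ultimately have "\<Union>((\<lambda>x. {x}) ` S) \<in> I"
    using ideal_Union[OF assms] by blast
  then show "S \<in> I"
    by simp
qed

lemma ideal_if_Int_dual_filter:
  assumes "is_ideal I" and "Y \<in> dual_filter I" and "D \<inter> Y \<in> I"
  shows "D \<in> I"
proof -
  obtain Z where "Z \<in> I" and "Y = - Z"
    using assms(2) unfolding dual_filter_def by blast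
  then have "(D \<inter> Y) \<union> Z \<in> I"
    using assms ideal_Un by blast
  then show ?thesis
    using \<open>Y = - Z\<close> ideal_mono[OF assms(1)] by blast
qed

definition diag_witness :: "('k::wellorder) set \<Rightarrow> ('k \<Rightarrow> 'k set) \<Rightarrow> 'k \<Rightarrow> 'k" where
  "diag_witness A X \<xi> = (LEAST \<alpha>. \<alpha> < \<xi> \<and> \<alpha> \<in> A \<and> \<xi> \<in> X \<alpha>)"

lemma diag_witness:
  assumes "\<xi> \<in> diag_union A X"
  shows "diag_witness A X \<xi> < \<xi>" and "diag_witness A X \<xi> \<in> A"
    and "\<xi> \<in> X (diag_witness A X \<xi>)"
proof -
  obtain \<alpha> where "\<alpha> < \<xi> \<and> \<alpha> \<in> A \<and> \<xi> \<in> X \<alpha>"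
    using assms unfolding diag_union_def by blast
  then have "diag_witness A X \<xi> < \<xi> \<and> diag_witness A X \<xi> \<in> A \<and> \<xi> \<in> X (diag_witness A X \<xi>)"
    unfolding diag_witness_def by (rule LeastI)
  then show "diag_witness A X \<xi> < \<xi>" and "diag_witness A X \<xi> \<in> A"
    and "\<xi> \<in> X (diag_witness A X \<xi>)" by blast+
qed

lemma diag_union_subset_fibres:
  assumes "\<And>\<xi>. \<xi> \<in> D \<Longrightarrow> f \<xi> < \<xi> \<and> f \<xi> \<in> A"
  shows "D \<inter> Y \<subseteq> diag_union A (\<lambda>\<alpha>. {\<xi> \<in> Y. f \<xi> = \<alpha>})"
  using assms unfolding diag_union_def by blast

lemma prepleasantD:
  "prepleasant I \<Longrightarrow> Q \<in> I \<Longrightarrow> (\<And>\<alpha>. bounded_set (B \<alpha>)) \<Longrightarrow> diag_union Q B \<in> I"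
  unfolding prepleasant_def by blast

lemma pleasant_imp_prepleasant:
  assumes "regular_uncountable_cardinal_type TYPE('k::wellorder)"
    and "is_ideal (I :: 'k set set)" and "pleasant I"
  shows "prepleasant I"
  unfolding prepleasant_def
proof (intro allI impI)
  fix Q and B :: "'k \<Rightarrow> 'k set"
  assume "Q \<in> I \<and> (\<forall>\<alpha>. bounded_set (B \<alpha>))"
  moreover have "B \<alpha> \<in> I" if "bounded_set (B \<alpha>)" for \<alpha>
    using that bounded_set_iff_Ikappa[OF assms(1)] Ikappa_subset_ideal[OF assms(2)] by blast
  ultimately show "diag_union Q B \<in> I"
    using \<open>pleasant I\<close> unfolding pleasant_def by blast
qed

lemma prepleasant_imp_pleasant:
  assumes kappa: "regular_uncountable_cardinal_type TYPE('k::wellorder)"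
    and ideal: "is_ideal (I :: 'k set set)" and "p_point I" and "prepleasant I"
  shows "pleasant I"
  unfolding pleasant_def
proof (intro allI impI)
  fix A and X :: "'k \<Rightarrow> 'k set"
  assume AX: "A \<in> I \<and> (\<forall>\<alpha>. X \<alpha> \<in> I)"
  define D where "D = diag_union A X"
  define f where "f \<xi> = (if \<xi> \<in> D then diag_witness A X \<xi> else \<xi>)" for \<xi>
  have "small I f UNIV"
    unfolding small_def
  proof
    fix \<alpha>
    have "{\<xi> \<in> UNIV. f \<xi> = \<alpha>} \<subseteq> X \<alpha> \<union> {\<alpha>}"
      using diag_witness(3) unfolding f_def D_def by force
    moreover have "X \<alpha> \<union> {\<alpha>} \<in> I"
      using AX ideal_Un[OF ideal] ideal_singleton[OF ideal] by blast
    ultimately show "{\<xi> \<in> UNIV. f \<xi> = \<alpha>} \<in> I"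
      using ideal_mono[OF ideal] by blast
  qed
  then obtain Y where "Y \<in> dual_filter I" and "small Ikappa f Y"
    using \<open>p_point I\<close> unfolding p_point_def by blast
  then have "bounded_set {\<xi> \<in> Y. f \<xi> = \<alpha>}" for \<alpha>
    using bounded_set_iff_Ikappa[OF kappa] unfolding small_def by blast
  then have "diag_union A (\<lambda>\<alpha>. {\<xi> \<in> Y. f \<xi> = \<alpha>}) \<in> I"
    using AX by (intro prepleasantD[OF \<open>prepleasant I\<close>]) simp_all
  moreover have "D \<inter> Y \<subseteq> diag_union A (\<lambda>\<alpha>. {\<xi> \<in> Y. f \<xi> = \<alpha>})"
    by (rule diag_union_subset_fibres) (simp add: f_def D_def diag_witness)
  ultimately have "D \<inter> Y \<in> I"
    using ideal_mono[OF ideal] by blast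
  show "diag_union A X \<in> I"
    using ideal_if_Int_dual_filter[OF ideal \<open>Y \<in> dual_filter I\<close> \<open>D \<inter> Y \<in> I\<close>]
    unfolding D_def .
qed

theorem theorem3p2:
  fixes I :: "('k::wellorder) set set"
  assumes "regular_uncountable_cardinal_type TYPE('k)"
    and "is_ideal I"
    and "p_point I"
  shows "prepleasant I \<longleftrightarrow> pleasant I"
  using pleasant_imp_prepleasant[OF assms(1,2)] prepleasant_imp_pleasant[OF assms] by blast

end
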